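(* Let $(\Omega,\mathcal F,\mathbb P)$ be a probability space with a left-continuous filtration $(\mathcal F(t))_{t\ge0}$, and let $T>0$. Let $(B(t))_{0\le t\le T}$ and $(C(t))_{0\le t\le T}$ be adapted continuous processes, with $B\ge0$ and $C$ uniformly bounded, and suppose $\mathbb E[\int_0^TB(u)\,\mathrm du]<\infty$. Set $A(t):=\int_0^t(B(u)+C(u))\,\mathrm du$. Let $t_0\in[0,T]$ be such that $$\lim_{t\to t_0}\mathbb E\Big[\frac{A(t)-A(t_0)}{t-t_0}\Big]=\mathbb E[B(t_0)+C(t_0)].$$ Then $$\lim_{t\uparrow t_0}\frac{\mathbb E[A(t_0)-A(t)\,|\,\mathcal F(t)]}{t_0-t}=\lim_{t\downarrow t_0}\frac{\mathbb E[A(t)-A(t_0)\,|\,\mathcal F(t_0)]}{t-t_0}=B(t_0)+C(t_0),$$ where both limits exist in $L^1(\mathbb P)$.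
   Context: A filtration is left-continuous if $\mathcal F(t)=\sigma\big(\bigcup_{u<t}\mathcal F(u)\big)$ for all $t>0$. The hypothesis on $t_0$ holds for Lebesgue-almost every $t_0\in[0,T]$. *)

theory Defs
  imports "HOL-Probability.Probability"
begin

definition intproc :: "(real \<Rightarrow> 'a \<Rightarrow> real) \<Rightarrow> (real \<Rightarrow> 'a \<Rightarrow> real) \<Rightarrow> real \<Rightarrow> 'a \<Rightarrow> real" where
  "intproc B C t \<omega> = (LINT u:{0..t}|lborel. B u \<omega> + C u \<omega>)"

text \<open>Convergence in L^1(M) of X(t) to Y along the filter G (norm measured by the
  nonnegative integral, so that it is meaningful also for non-integrable X(t)).\<close>
definition L1_tendsto :: "'a measure \<Rightarrow> (real \<Rightarrow> 'a \<Rightarrow> real) \<Rightarrow> ('a \<Rightarrow> real) \<Rightarrow> real filter \<Rightarrow> bool" where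
  "L1_tendsto M X Y G \<longleftrightarrow>
     (\<forall>\<^sub>F t in G. integrable M (X t)) \<and> integrable M Y \<and>
     ((\<lambda>t. \<integral>\<^sup>+ \<omega>. ennreal \<bar>X t \<omega> - Y \<omega>\<bar> \<partial>M) \<longlongrightarrow> 0) G"

end

theory Submission
  imports Defs
begin

text \<open>
  Write \<open>Q t = (A t - A t0) / (t - t0)\<close>. Pathwise, \<open>Q t \<rightarrow> B t0 + C t0\<close> by the
  fundamental theorem of calculus, and \<open>Q t\<close> is bounded below by \<open>-K\<close>, where \<open>K\<close> bounds
  \<open>|C|\<close>. Together with the assumed convergence of the means, Fatou's lemma and Scheff\'e's
  lemma upgrade the pointwise convergence to convergence in \<open>L\<^sup>1\<close>.

  Conditional expectation is an \<open>L\<^sup>1\<close>-contraction, so for any \<open>\<F>(s)\<close>-measurable \<open>D\<close>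
  the \<open>L\<^sup>1\<close>-distance of \<open>E[Q t | \<F>(s)]\<close> to the limit is at most that of \<open>Q t\<close> to \<open>D\<close>
  plus that of \<open>D\<close> to the limit. From the right, take \<open>s = t0\<close> and \<open>D = B t0 + C t0\<close>.
  From the left, take \<open>s = t\<close> and \<open>D = 2 Q(2t - t0) - Q t = (A t - A(2t - t0)) / (t0 - t)\<close>,
  which is \<open>\<F>(t)\<close>-measurable and \<open>L\<^sup>1\<close>-close to the limit because both difference
  quotients are.
\<close>

definition diff_quot :: "(real \<Rightarrow> 'a \<Rightarrow> real) \<Rightarrow> real \<Rightarrow> real \<Rightarrow> 'a \<Rightarrow> real" where
  "diff_quot A t0 t \<omega> = (A t \<omega> - A t0 \<omega>) / (t - t0)"

section \<open>Measurability of time integrals of continuous processes\<close>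

lemma LIMSEQ_floor_mult_div:
  fixes x :: real
  shows "(\<lambda>n. real_of_int \<lfloor>real (Suc n) * x\<rfloor> / real (Suc n)) \<longlonglongrightarrow> x"
proof (rule tendsto_sandwich[of "\<lambda>n. x - 1 / real (Suc n)" _ _ "\<lambda>n. x"])
  show "\<forall>\<^sub>F n in sequentially. x - 1 / real (Suc n) \<le> real_of_int \<lfloor>real (Suc n) * x\<rfloor> / real (Suc n)"
  proof (intro always_eventually allI)
    fix n
    have "real (Suc n) * x - 1 \<le> real_of_int \<lfloor>real (Suc n) * x\<rfloor>" by linarith
    then have "(real (Suc n) * x - 1) / real (Suc n) \<le> real_of_int \<lfloor>real (Suc n) * x\<rfloor> / real (Suc n)"
      by (rule divide_right_mono) simp
    moreover have "(real (Suc n) * x - 1) / real (Suc n) = x - 1 / real (Suc n)"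
      by (simp add: field_simps)
    ultimately show "x - 1 / real (Suc n) \<le> real_of_int \<lfloor>real (Suc n) * x\<rfloor> / real (Suc n)"
      by simp
  qed
  show "\<forall>\<^sub>F n in sequentially. real_of_int \<lfloor>real (Suc n) * x\<rfloor> / real (Suc n) \<le> x"
  proof (intro always_eventually allI)
    fix n
    have "real_of_int \<lfloor>real (Suc n) * x\<rfloor> \<le> real (Suc n) * x" by linarith
    then show "real_of_int \<lfloor>real (Suc n) * x\<rfloor> / real (Suc n) \<le> x"
      by (simp add: field_simps)
  qed
  have "(\<lambda>n. 1 / real (Suc n)) \<longlonglongrightarrow> 0" by (rule LIMSEQ_Suc[OF lim_const_over_n])
  then show "(\<lambda>n. x - 1 / real (Suc n)) \<longlonglongrightarrow> x" using tendsto_diff[of "\<lambda>_. x" x] by fastforce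
qed simp

text \<open>Joint measurability: on the grid \<open>\<lfloor>n u\<rfloor> / n\<close> time takes only countably many values,
  and pathwise continuity makes the process the pointwise limit of these discretisations.\<close>

lemma borel_measurable_continuous_process_clamped:
  fixes X :: "real \<Rightarrow> 'a \<Rightarrow> real" and s :: real
  assumes s: "0 \<le> s" and meas: "\<And>t. t \<in> {0..s} \<Longrightarrow> X t \<in> borel_measurable N"
    and cont: "\<And>\<omega>. \<omega> \<in> space N \<Longrightarrow> continuous_on {0..s} (\<lambda>t. X t \<omega>)"
  shows "(\<lambda>p. X (max 0 (min s (snd p))) (fst p)) \<in> borel_measurable (N \<Otimes>\<^sub>M lborel)"
proof -
  define c where "c u = max 0 (min s u)" for u :: real
  have c_in: "c u \<in> {0..s}" for u using s by (auto simp: c_def)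
  define g where "g n p = X (c (real_of_int \<lfloor>real (Suc n) * c (snd p)\<rfloor> / real (Suc n))) (fst p)"
    for n :: nat and p :: "'a \<times> real"
  show ?thesis unfolding c_def[symmetric]
  proof (rule borel_measurable_LIMSEQ_real[where u = g])
    fix n
    have "(\<lambda>p. (\<lambda>i::int. \<lambda>p. X (c (real_of_int i / real (Suc n))) (fst p)) (\<lfloor>real (Suc n) * c (snd p)\<rfloor>) p)
        \<in> borel_measurable (N \<Otimes>\<^sub>M lborel)"
    proof (rule measurable_compose_countable[where g = "\<lambda>p. \<lfloor>real (Suc n) * c (snd p)\<rfloor>"])
      fix i :: int
      show "(\<lambda>p. X (c (real_of_int i / real (Suc n))) (fst p)) \<in> borel_measurable (N \<Otimes>\<^sub>M lborel)"
        by (rule measurable_compose[OF measurable_fst]) (rule meas[OF c_in])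
    next
      show "(\<lambda>p. \<lfloor>real (Suc n) * c (snd p)\<rfloor>) \<in> N \<Otimes>\<^sub>M lborel \<rightarrow>\<^sub>M count_space UNIV"
        unfolding c_def by measurable
    qed
    then show "g n \<in> borel_measurable (N \<Otimes>\<^sub>M lborel)" unfolding g_def by simp
  next
    fix p :: "'a \<times> real" assume "p \<in> space (N \<Otimes>\<^sub>M lborel)"
    then have \<omega>: "fst p \<in> space N" by (auto simp: space_pair_measure)
    have "continuous_on UNIV c" unfolding c_def by (intro continuous_intros)
    then have "(\<lambda>n. c (real_of_int \<lfloor>real (Suc n) * c (snd p)\<rfloor> / real (Suc n))) \<longlonglongrightarrow> c (c (snd p))"
      by (rule continuous_on_tendsto_compose[OF _ LIMSEQ_floor_mult_div]) auto
    moreover have "c (c u) = c u" for u unfolding c_def using s by auto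
    ultimately have "(\<lambda>n. c (real_of_int \<lfloor>real (Suc n) * c (snd p)\<rfloor> / real (Suc n))) \<longlonglongrightarrow> c (snd p)"
      by simp
    then show "(\<lambda>n. g n p) \<longlonglongrightarrow> X (c (snd p)) (fst p)"
      unfolding g_def
      by (rule continuous_on_tendsto_compose[OF cont[OF \<omega>]]) (use c_in in \<open>auto intro!: always_eventually\<close>)
  qed
qed

lemma borel_measurable_set_integral_process:
  fixes X :: "real \<Rightarrow> 'a \<Rightarrow> real" and s t :: real
  assumes "0 \<le> s" and "t \<le> s" and "\<And>u. u \<in> {0..s} \<Longrightarrow> X u \<in> borel_measurable N"
    and "\<And>\<omega>. \<omega> \<in> space N \<Longrightarrow> continuous_on {0..s} (\<lambda>u. X u \<omega>)"
  shows "(\<lambda>\<omega>. LINT u:{0..t}|lborel. X u \<omega>) \<in> borel_measurable N"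
proof -
  define c where "c u = max 0 (min s u)" for u :: real
  have [measurable]: "(\<lambda>p. X (c (snd p)) (fst p)) \<in> borel_measurable (N \<Otimes>\<^sub>M lborel)"
    unfolding c_def using assms(1,3,4) by (rule borel_measurable_continuous_process_clamped)
  have "(LINT u:{0..t}|lborel. X u \<omega>) = (\<integral>u. indicator {0..t} u * X (c u) \<omega> \<partial>lborel)" for \<omega>
    unfolding set_lebesgue_integral_def using \<open>t \<le> s\<close>
    by (intro Bochner_Integration.integral_cong) (auto simp: indicator_def c_def)
  moreover have "(\<lambda>\<omega>. \<integral>u. indicator {0..t} u * X (c u) \<omega> \<partial>lborel) \<in> borel_measurable N"
    by (rule lborel.borel_measurable_lebesgue_integral) measurable
  ultimately show ?thesis by simp
qed

lemma borel_measurable_intproc: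
  assumes "0 \<le> s" and "s \<le> t"
    and "\<And>u. u \<in> {0..t} \<Longrightarrow> B u \<in> borel_measurable N"
    and "\<And>u. u \<in> {0..t} \<Longrightarrow> C u \<in> borel_measurable N"
    and "\<And>\<omega>. \<omega> \<in> space N \<Longrightarrow> continuous_on {0..t} (\<lambda>u. B u \<omega> + C u \<omega>)"
  shows "intproc B C s \<in> borel_measurable N"
  unfolding intproc_def[abs_def] using assms
  by (intro borel_measurable_set_integral_process[where s = t]) auto

lemma set_integral_Icc_eq_integral:
  fixes f :: "real \<Rightarrow> real"
  assumes "continuous_on {a..b} f"
  shows "(LINT u:{a..b}|lborel. f u) = integral {a..b} f"
  using set_borel_integral_eq_integral(2)[OF borel_integrable_atLeastAtMost'[OF assms]] .

lemma integral_diff_quotient_ge: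
  fixes f :: "real \<Rightarrow> real"
  assumes f: "continuous_on {a..b} f" and f_ge: "\<And>u. u \<in> {a..b} \<Longrightarrow> c \<le> f u"
    and s: "s \<in> {a..b}" and t: "t \<in> {a..b}" and "s \<noteq> t"
  shows "c \<le> (integral {a..t} f - integral {a..s} f) / (t - s)"
proof -
  have forward: "c \<le> (integral {a..v} f - integral {a..u} f) / (v - u)"
    if u: "u \<in> {a..b}" and v: "v \<in> {a..b}" and "u < v" for u v
  proof -
    have "f integrable_on {a..v}"
      using v by (intro integrable_continuous_interval continuous_on_subset[OF f]) auto
    then have "integral {a..u} f + integral {u..v} f = integral {a..v} f"
      using u \<open>u < v\<close> by (intro Henstock_Kurzweil_Integration.integral_combine) auto
    moreover have "integral {u..v} (\<lambda>_. c) \<le> integral {u..v} f"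
      using u v f_ge
      by (intro integral_le integrable_continuous_interval continuous_on_subset[OF f]) auto
    ultimately have "c * (v - u) \<le> integral {a..v} f - integral {a..u} f"
      using \<open>u < v\<close> by (simp add: mult.commute)
    with \<open>u < v\<close> show ?thesis by (simp add: le_divide_eq)
  qed
  show ?thesis
  proof (cases "s < t")
    case True
    then show ?thesis by (rule forward[OF s t])
  next
    case False
    with \<open>s \<noteq> t\<close> have "t < s" by simp
    from forward[OF t s this] show ?thesis
      by (metis minus_diff_eq minus_divide_divide)
  qed
qed

lemma divide_extrapolation_eq:
  fixes a b c s t :: real
  shows "(b - c) / (s - t) = 2 * ((c - a) / ((2 * t - s) - s)) - (b - a) / (t - s)"
  by (cases "t = s") (simp_all add: divide_simps, argo?)

lemma abs_extrapolated_quotient_le: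
  fixes q q' y :: real
  shows "ennreal \<bar>q - (2 * q' - q)\<bar> + ennreal \<bar>(2 * q' - q) - y\<bar>
    \<le> 3 * ennreal \<bar>q - y\<bar> + 4 * ennreal \<bar>q' - y\<bar>"
proof -
  have "\<bar>q - (2 * q' - q)\<bar> + \<bar>(2 * q' - q) - y\<bar> \<le> 3 * \<bar>q - y\<bar> + 4 * \<bar>q' - y\<bar>"
    by (simp add: abs_if)
  then have "ennreal (\<bar>q - (2 * q' - q)\<bar> + \<bar>(2 * q' - q) - y\<bar>) \<le> ennreal (3 * \<bar>q - y\<bar> + 4 * \<bar>q' - y\<bar>)"
    by (rule ennreal_leI)
  then show ?thesis by (simp add: ennreal_mult)
qed

section \<open>Convergence in mean\<close>

lemma integrable_nonneg_limit:
  fixes G :: "nat \<Rightarrow> 'a \<Rightarrow> real"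
  assumes G_int: "\<And>n. integrable M (G n)" and G_nonneg: "\<And>n x. x \<in> space M \<Longrightarrow> 0 \<le> G n x"
    and g: "g \<in> borel_measurable M" "\<And>x. x \<in> space M \<Longrightarrow> 0 \<le> g x"
    and lim: "\<And>x. x \<in> space M \<Longrightarrow> (\<lambda>n. G n x) \<longlonglongrightarrow> g x"
    and mean: "(\<lambda>n. \<integral>x. G n x \<partial>M) \<longlonglongrightarrow> c"
  shows "integrable M g"
proof (rule integrableI_nonneg[OF g(1)])
  show "AE x in M. 0 \<le> g x" using g(2) by auto
  have [measurable]: "\<And>n. G n \<in> borel_measurable M" using G_int by auto
  have "(\<integral>\<^sup>+x. ennreal (g x) \<partial>M) = (\<integral>\<^sup>+x. liminf (\<lambda>n. ennreal (G n x)) \<partial>M)"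
  proof (rule nn_integral_cong)
    fix x assume "x \<in> space M"
    then have "(\<lambda>n. ennreal (G n x)) \<longlonglongrightarrow> ennreal (g x)" using lim by (intro tendsto_ennrealI) auto
    then show "ennreal (g x) = liminf (\<lambda>n. ennreal (G n x))"
      by (simp add: lim_imp_Liminf)
  qed
  also have "\<dots> \<le> liminf (\<lambda>n. \<integral>\<^sup>+x. ennreal (G n x) \<partial>M)"
    by (rule nn_integral_liminf) auto
  also have "(\<lambda>n. \<integral>\<^sup>+x. ennreal (G n x) \<partial>M) = (\<lambda>n. ennreal (\<integral>x. G n x \<partial>M))"
    using G_int G_nonneg by (intro ext nn_integral_eq_integral) auto
  also have "liminf (\<lambda>n. ennreal (\<integral>x. G n x \<partial>M)) = ennreal c"
    using mean by (intro lim_imp_Liminf tendsto_ennrealI) auto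
  finally show "(\<integral>\<^sup>+x. ennreal (g x) \<partial>M) < \<infinity>"
    by (simp add: order_le_less_trans)
qed

lemma Scheffe_lemma_nonneg:
  fixes G :: "nat \<Rightarrow> 'a \<Rightarrow> real"
  assumes G_int: "\<And>n. integrable M (G n)" and G_nonneg: "\<And>n x. x \<in> space M \<Longrightarrow> 0 \<le> G n x"
    and g: "integrable M g" "\<And>x. x \<in> space M \<Longrightarrow> 0 \<le> g x"
    and lim: "\<And>x. x \<in> space M \<Longrightarrow> (\<lambda>n. G n x) \<longlonglongrightarrow> g x"
    and mean: "(\<lambda>n. \<integral>x. G n x \<partial>M) \<longlonglongrightarrow> (\<integral>x. g x \<partial>M)"
  shows "(\<lambda>n. \<integral>\<^sup>+x. ennreal \<bar>G n x - g x\<bar> \<partial>M) \<longlonglongrightarrow> 0"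
proof -
  have nn_eq: "(\<integral>\<^sup>+x. norm (f x) \<partial>M) = ennreal (\<integral>x. f x \<partial>M)"
    if "integrable M f" "\<And>x. x \<in> space M \<Longrightarrow> 0 \<le> f x" for f :: "'a \<Rightarrow> real"
  proof -
    have "(\<integral>\<^sup>+x. norm (f x) \<partial>M) = (\<integral>\<^sup>+x. ennreal (f x) \<partial>M)"
      by (rule nn_integral_cong) (use that in auto)
    also have "\<dots> = ennreal (\<integral>x. f x \<partial>M)"
      using that by (intro nn_integral_eq_integral) auto
    finally show ?thesis .
  qed
  have "limsup (\<lambda>n. ennreal (\<integral>x. G n x \<partial>M)) = ennreal (\<integral>x. g x \<partial>M)"
    using mean by (intro lim_imp_Limsup tendsto_ennrealI) auto
  then have "limsup (\<lambda>n. \<integral>\<^sup>+x. norm (G n x) \<partial>M) \<le> (\<integral>\<^sup>+x. norm (g x) \<partial>M)"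
    using nn_eq[OF G_int G_nonneg] nn_eq[OF g] by simp
  with G_int g(1) lim have "(\<lambda>n. \<integral>\<^sup>+x. norm (G n x - g x) \<partial>M) \<longlonglongrightarrow> 0"
    by (intro Scheffe_lemma1) auto
  then show ?thesis by simp
qed

lemma (in finite_measure) L1_tendsto_bounded_below:
  fixes X :: "real \<Rightarrow> 'a \<Rightarrow> real"
  assumes "x islimpt S"
    and X_int: "\<And>t. t \<in> S - {x} \<Longrightarrow> integrable M (X t)"
    and X_ge: "\<And>t \<omega>. t \<in> S - {x} \<Longrightarrow> \<omega> \<in> space M \<Longrightarrow> c \<le> X t \<omega>"
    and Y: "Y \<in> borel_measurable M"
    and lim: "\<And>\<omega>. \<omega> \<in> space M \<Longrightarrow> ((\<lambda>t. X t \<omega>) \<longlongrightarrow> Y \<omega>) (at x within S)"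
    and mean: "((\<lambda>t. \<integral>\<omega>. X t \<omega> \<partial>M) \<longlongrightarrow> (\<integral>\<omega>. Y \<omega> \<partial>M)) (at x within S)"
  shows "L1_tendsto M X Y (at x within S)"
proof -
  define \<mu> where "\<mu> = measure M (space M)"
  have shift: "(\<integral>\<omega>. f \<omega> - c \<partial>M) = (\<integral>\<omega>. f \<omega> \<partial>M) - \<mu> * c" if "integrable M f" for f
    using that by (simp add: \<mu>_def)
  have "at x within S \<noteq> bot"
    using \<open>x islimpt S\<close> trivial_limit_within by blast
  moreover have "\<forall>\<^sub>F t in at x within S. c \<le> X t \<omega>" if "\<omega> \<in> space M" for \<omega>
    unfolding eventually_at_filter using X_ge[OF _ that] by (intro always_eventually) blast
  ultimately have Y_ge: "c \<le> Y \<omega>" if "\<omega> \<in> space M" for \<omega>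
    using tendsto_lowerbound[OF lim[OF that]] that by blast
  have seq_lim: "(\<lambda>n. X (ts n) \<omega> - c) \<longlonglongrightarrow> Y \<omega> - c"
    if "\<forall>n. ts n \<in> S - {x}" "ts \<longlonglongrightarrow> x" "\<omega> \<in> space M" for ts \<omega>
  proof -
    have "(\<lambda>n. X (ts n) \<omega>) \<longlonglongrightarrow> Y \<omega>"
      using lim[OF that(3), unfolded tendsto_at_iff_sequentially] that(1,2) unfolding o_def by blast
    then show ?thesis by (rule tendsto_diff[OF _ tendsto_const])
  qed
  have seq_mean: "(\<lambda>n. \<integral>\<omega>. X (ts n) \<omega> - c \<partial>M) \<longlonglongrightarrow> (\<integral>\<omega>. Y \<omega> \<partial>M) - \<mu> * c"
    if ts: "\<forall>n. ts n \<in> S - {x}" "ts \<longlonglongrightarrow> x" for ts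
  proof -
    have "(\<lambda>n. \<integral>\<omega>. X (ts n) \<omega> \<partial>M) \<longlonglongrightarrow> (\<integral>\<omega>. Y \<omega> \<partial>M)"
      using mean[unfolded tendsto_at_iff_sequentially] ts unfolding o_def by blast
    then have "(\<lambda>n. (\<integral>\<omega>. X (ts n) \<omega> \<partial>M) - \<mu> * c) \<longlonglongrightarrow> (\<integral>\<omega>. Y \<omega> \<partial>M) - \<mu> * c"
      by (rule tendsto_diff[OF _ tendsto_const])
    moreover have "(\<integral>\<omega>. X (ts n) \<omega> - c \<partial>M) = (\<integral>\<omega>. X (ts n) \<omega> \<partial>M) - \<mu> * c" for n
      using shift X_int ts(1) by blast
    ultimately show ?thesis by simp
  qed
  obtain ts where ts: "\<forall>n. ts n \<in> S - {x}" "ts \<longlonglongrightarrow> x"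
    using \<open>x islimpt S\<close> unfolding islimpt_sequential by blast
  have "integrable M (\<lambda>\<omega>. Y \<omega> - c)"
  proof (rule integrable_nonneg_limit)
    show "integrable M (\<lambda>\<omega>. X (ts n) \<omega> - c)" for n
      using X_int ts(1) by simp
    show "0 \<le> X (ts n) \<omega> - c" if "\<omega> \<in> space M" for n \<omega>
      using X_ge[OF _ that] ts(1) by simp
    show "0 \<le> Y \<omega> - c" if "\<omega> \<in> space M" for \<omega>
      using Y_ge[OF that] by simp
    show "(\<lambda>\<omega>. Y \<omega> - c) \<in> borel_measurable M" using Y by simp
    show "(\<lambda>n. X (ts n) \<omega> - c) \<longlonglongrightarrow> Y \<omega> - c" if "\<omega> \<in> space M" for \<omega>
      by (rule seq_lim[OF ts that])
  qed (rule seq_mean[OF ts])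
  then have Y_int: "integrable M Y"
    using Bochner_Integration.integrable_add[of M "\<lambda>\<omega>. Y \<omega> - c" "\<lambda>_. c"] by simp
  have "((\<lambda>t. \<integral>\<^sup>+\<omega>. ennreal \<bar>X t \<omega> - Y \<omega>\<bar> \<partial>M) \<longlongrightarrow> 0) (at x within S)"
    unfolding tendsto_at_iff_sequentially o_def
  proof (intro allI impI)
    fix ts assume ts: "\<forall>n. ts n \<in> S - {x}" "ts \<longlonglongrightarrow> x"
    have "(\<lambda>n. \<integral>\<^sup>+\<omega>. ennreal \<bar>(X (ts n) \<omega> - c) - (Y \<omega> - c)\<bar> \<partial>M) \<longlonglongrightarrow> 0"
    proof (rule Scheffe_lemma_nonneg)
      show "integrable M (\<lambda>\<omega>. X (ts n) \<omega> - c)" for n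
        using X_int ts(1) by simp
      show "integrable M (\<lambda>\<omega>. Y \<omega> - c)" using Y_int by simp
      show "(\<lambda>n. \<integral>\<omega>. X (ts n) \<omega> - c \<partial>M) \<longlonglongrightarrow> (\<integral>\<omega>. Y \<omega> - c \<partial>M)"
        using seq_mean[OF ts] shift[OF Y_int] by simp
      show "0 \<le> X (ts n) \<omega> - c" if "\<omega> \<in> space M" for n \<omega>
        using X_ge[OF _ that] ts(1) by simp
      show "0 \<le> Y \<omega> - c" if "\<omega> \<in> space M" for \<omega>
        using Y_ge[OF that] by simp
      show "(\<lambda>n. X (ts n) \<omega> - c) \<longlonglongrightarrow> Y \<omega> - c" if "\<omega> \<in> space M" for \<omega>
        by (rule seq_lim[OF ts that])
    qed
    then show "(\<lambda>n. \<integral>\<^sup>+\<omega>. ennreal \<bar>X (ts n) \<omega> - Y \<omega>\<bar> \<partial>M) \<longlonglongrightarrow> 0" by simp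
  qed
  moreover have "\<forall>\<^sub>F t in at x within S. integrable M (X t)"
    unfolding eventually_at_filter using X_int by (intro always_eventually) blast
  ultimately show ?thesis
    unfolding L1_tendsto_def using Y_int by blast
qed

lemma L1_tendstoI_bound:
  assumes "\<forall>\<^sub>F t in G. integrable M (X t)" and "integrable M Y"
    and "\<forall>\<^sub>F t in G. (\<integral>\<^sup>+\<omega>. ennreal \<bar>X t \<omega> - Y \<omega>\<bar> \<partial>M) \<le> h t" and "(h \<longlongrightarrow> 0) G"
  shows "L1_tendsto M X Y G"
  unfolding L1_tendsto_def using assms by (auto intro: tendsto_sandwich[where f = "\<lambda>_. 0"])

lemma L1_tendsto_within_subset:
  assumes "L1_tendsto M X Y (at x within S)" and "U \<subseteq> S"
  shows "L1_tendsto M X Y (at x within U)"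
  using assms unfolding L1_tendsto_def
  by (auto intro: tendsto_within_subset filter_leD[OF at_le])

section \<open>Conditional difference quotients\<close>

context sigma_finite_subalgebra
begin

lemma nn_integral_abs_real_cond_exp_le:
  assumes [measurable]: "f \<in> borel_measurable M"
  shows "(\<integral>\<^sup>+x. ennreal \<bar>real_cond_exp M F f x\<bar> \<partial>M) \<le> (\<integral>\<^sup>+x. ennreal \<bar>f x\<bar> \<partial>M)"
proof -
  have "(\<integral>\<^sup>+x. ennreal \<bar>real_cond_exp M F f x\<bar> \<partial>M) \<le> (\<integral>\<^sup>+x. nn_cond_exp M F (\<lambda>x. ennreal \<bar>f x\<bar>) x \<partial>M)"
    by (rule nn_integral_mono_AE) (use real_cond_exp_abs[OF assms] in auto)
  also have "\<dots> = (\<integral>\<^sup>+x. (\<lambda>_. 1) x * nn_cond_exp M F (\<lambda>x. ennreal \<bar>f x\<bar>) x \<partial>M)" by simp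
  also have "\<dots> = (\<integral>\<^sup>+x. (\<lambda>_. 1) x * ennreal \<bar>f x\<bar> \<partial>M)"
    by (rule nn_cond_exp_intg) auto
  finally show ?thesis by simp
qed

text \<open>Conditioning fixes the \<open>F\<close>-measurable \<open>D\<close> and contracts the \<open>L\<^sup>1\<close>-norm.\<close>

lemma nn_integral_abs_real_cond_exp_div_le:
  assumes f: "integrable M f" and D: "integrable M D" "D \<in> borel_measurable F"
    and [measurable]: "Y \<in> borel_measurable M"
  shows "(\<integral>\<^sup>+x. ennreal \<bar>real_cond_exp M F f x / c - Y x\<bar> \<partial>M)
    \<le> (\<integral>\<^sup>+x. ennreal \<bar>f x / c - D x\<bar> \<partial>M) + (\<integral>\<^sup>+x. ennreal \<bar>D x - Y x\<bar> \<partial>M)"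
proof -
  have [measurable]: "f \<in> borel_measurable M" "D \<in> borel_measurable M"
    using f D(1) by auto
  have fc: "integrable M (\<lambda>x. f x / c)" using f by simp
  have "AE x in M. real_cond_exp M F f x / c - Y x
      = real_cond_exp M F (\<lambda>x. f x / c - D x) x + (D x - Y x)"
    using real_cond_exp_cdiv[OF f, of c] real_cond_exp_diff[OF fc D(1)] real_cond_exp_F_meas[OF D]
    by auto
  then have "(\<integral>\<^sup>+x. ennreal \<bar>real_cond_exp M F f x / c - Y x\<bar> \<partial>M)
      \<le> (\<integral>\<^sup>+x. ennreal \<bar>real_cond_exp M F (\<lambda>x. f x / c - D x) x\<bar> + ennreal \<bar>D x - Y x\<bar> \<partial>M)"
    by (intro nn_integral_mono_AE) (auto simp: ennreal_plus[symmetric] simp del: ennreal_plus)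
  also have "\<dots> = (\<integral>\<^sup>+x. ennreal \<bar>real_cond_exp M F (\<lambda>x. f x / c - D x) x\<bar> \<partial>M)
      + (\<integral>\<^sup>+x. ennreal \<bar>D x - Y x\<bar> \<partial>M)"
    by (rule nn_integral_add) auto
  also have "\<dots> \<le> (\<integral>\<^sup>+x. ennreal \<bar>f x / c - D x\<bar> \<partial>M) + (\<integral>\<^sup>+x. ennreal \<bar>D x - Y x\<bar> \<partial>M)"
    by (intro add_right_mono nn_integral_abs_real_cond_exp_le) measurable
  finally show ?thesis .
qed

lemma nn_integral_real_cond_exp_backward_quotient_le:
  assumes A_int: "integrable M (A t0)" "integrable M (A t)" "integrable M (A (2 * t - t0))"
    and A_F: "A t \<in> borel_measurable F" "A (2 * t - t0) \<in> borel_measurable F"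
    and Y[measurable]: "Y \<in> borel_measurable M"
  shows "(\<integral>\<^sup>+\<omega>. ennreal \<bar>real_cond_exp M F (\<lambda>\<omega>'. A t0 \<omega>' - A t \<omega>') \<omega> / (t0 - t) - Y \<omega>\<bar> \<partial>M)
    \<le> 3 * (\<integral>\<^sup>+\<omega>. ennreal \<bar>diff_quot A t0 t \<omega> - Y \<omega>\<bar> \<partial>M)
      + 4 * (\<integral>\<^sup>+\<omega>. ennreal \<bar>diff_quot A t0 (2 * t - t0) \<omega> - Y \<omega>\<bar> \<partial>M)"
proof -
  define t' where "t' = 2 * t - t0"
  define q where "q = diff_quot A t0 t"
  define q' where "q' = diff_quot A t0 t'"
  define D where "D \<omega> = (A t \<omega> - A t' \<omega>) / (t0 - t)" for \<omega>
  have [measurable]: "A t0 \<in> borel_measurable M" "A t \<in> borel_measurable M" "A t' \<in> borel_measurable M"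
    using A_int unfolding t'_def by auto
  have [measurable]: "q \<in> borel_measurable M" "q' \<in> borel_measurable M"
    unfolding q_def q'_def diff_quot_def[abs_def] by measurable
  have D_F: "D \<in> borel_measurable F"
    using A_F unfolding D_def t'_def by measurable
  have D_int: "integrable M D"
    using A_int unfolding D_def t'_def by (intro integrable_divide Bochner_Integration.integrable_diff)
  then have [measurable]: "D \<in> borel_measurable M" by auto
  have f: "integrable M (\<lambda>\<omega>. A t0 \<omega> - A t \<omega>)"
    using A_int by (intro Bochner_Integration.integrable_diff)
  have quot: "(A t0 \<omega> - A t \<omega>) / (t0 - t) = q \<omega>" for \<omega>
    unfolding q_def diff_quot_def by (metis minus_diff_eq minus_divide_divide)
  have extrapolation: "D \<omega> = 2 * q' \<omega> - q \<omega>" for \<omega>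
    unfolding D_def q_def q'_def diff_quot_def t'_def by (rule divide_extrapolation_eq)
  have "(\<integral>\<^sup>+\<omega>. ennreal \<bar>real_cond_exp M F (\<lambda>\<omega>'. A t0 \<omega>' - A t \<omega>') \<omega> / (t0 - t) - Y \<omega>\<bar> \<partial>M)
      \<le> (\<integral>\<^sup>+\<omega>. ennreal \<bar>q \<omega> - D \<omega>\<bar> \<partial>M) + (\<integral>\<^sup>+\<omega>. ennreal \<bar>D \<omega> - Y \<omega>\<bar> \<partial>M)"
    using nn_integral_abs_real_cond_exp_div_le[OF f D_int D_F Y, of "t0 - t"] by (simp only: quot)
  also have "\<dots> = (\<integral>\<^sup>+\<omega>. ennreal \<bar>q \<omega> - D \<omega>\<bar> + ennreal \<bar>D \<omega> - Y \<omega>\<bar> \<partial>M)"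
    by (rule nn_integral_add[symmetric]) measurable
  also have "\<dots> \<le> (\<integral>\<^sup>+\<omega>. 3 * ennreal \<bar>q \<omega> - Y \<omega>\<bar> + 4 * ennreal \<bar>q' \<omega> - Y \<omega>\<bar> \<partial>M)"
    unfolding extrapolation by (intro nn_integral_mono abs_extrapolated_quotient_le)
  also have "\<dots> = 3 * (\<integral>\<^sup>+\<omega>. ennreal \<bar>q \<omega> - Y \<omega>\<bar> \<partial>M) + 4 * (\<integral>\<^sup>+\<omega>. ennreal \<bar>q' \<omega> - Y \<omega>\<bar> \<partial>M)"
    by (simp add: nn_integral_add nn_integral_cmult)
  finally show ?thesis unfolding q_def q'_def t'_def .
qed

end

lemma L1_tendsto_real_cond_exp_forward_quotient:
  assumes "sigma_finite_subalgebra M N"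
    and A_int: "\<forall>\<^sub>F t in at t0 within S. integrable M (A t)" "integrable M (A t0)"
    and L1: "L1_tendsto M (diff_quot A t0) Y (at t0 within S)"
    and Y: "Y \<in> borel_measurable N"
  shows "L1_tendsto M (\<lambda>t \<omega>. real_cond_exp M N (\<lambda>\<omega>'. A t \<omega>' - A t0 \<omega>') \<omega> / (t - t0)) Y
    (at t0 within S)"
proof -
  interpret sigma_finite_subalgebra M N by fact
  have Y_int: "integrable M Y" and e: "((\<lambda>t. \<integral>\<^sup>+\<omega>. ennreal \<bar>diff_quot A t0 t \<omega> - Y \<omega>\<bar> \<partial>M) \<longlongrightarrow> 0)
      (at t0 within S)"
    using L1 unfolding L1_tendsto_def by auto
  have Y_M: "Y \<in> borel_measurable M" using Y_int by auto
  show ?thesis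
  proof (rule L1_tendstoI_bound[OF _ Y_int _ e])
    show "\<forall>\<^sub>F t in at t0 within S. integrable M (\<lambda>\<omega>. real_cond_exp M N (\<lambda>\<omega>'. A t \<omega>' - A t0 \<omega>') \<omega> / (t - t0))"
      using A_int(1)
    proof eventually_elim
      case (elim t)
      with A_int(2) have "integrable M (\<lambda>\<omega>. A t \<omega> - A t0 \<omega>)" by simp
      then show ?case by (intro integrable_divide real_cond_exp_int(1))
    qed
    show "\<forall>\<^sub>F t in at t0 within S.
        (\<integral>\<^sup>+\<omega>. ennreal \<bar>real_cond_exp M N (\<lambda>\<omega>'. A t \<omega>' - A t0 \<omega>') \<omega> / (t - t0) - Y \<omega>\<bar> \<partial>M)
        \<le> (\<integral>\<^sup>+\<omega>. ennreal \<bar>diff_quot A t0 t \<omega> - Y \<omega>\<bar> \<partial>M)"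
      using A_int(1)
    proof eventually_elim
      case (elim t)
      then have "integrable M (\<lambda>\<omega>. A t \<omega> - A t0 \<omega>)" using A_int(2) by auto
      from nn_integral_abs_real_cond_exp_div_le[OF this Y_int Y Y_M]
      show ?case by (simp add: diff_quot_def)
    qed
  qed
qed

lemma L1_tendsto_real_cond_exp_backward_quotient:
  assumes sub: "\<And>t. t \<in> {0..<t0} \<Longrightarrow> sigma_finite_subalgebra M (F t)"
    and adapted: "\<And>s t. 0 \<le> s \<Longrightarrow> s \<le> t \<Longrightarrow> t < t0 \<Longrightarrow> A s \<in> borel_measurable (F t)"
    and A_int: "\<And>t. t \<in> {0..t0} \<Longrightarrow> integrable M (A t)"
    and L1: "L1_tendsto M (diff_quot A t0) Y (at t0 within {0..<t0})"
  shows "L1_tendsto M (\<lambda>t \<omega>. real_cond_exp M (F t) (\<lambda>\<omega>'. A t0 \<omega>' - A t \<omega>') \<omega> / (t0 - t)) Y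
    (at t0 within {0..<t0})"
proof -
  define e where "e t = (\<integral>\<^sup>+\<omega>. ennreal \<bar>diff_quot A t0 t \<omega> - Y \<omega>\<bar> \<partial>M)" for t
  have Y_int: "integrable M Y" and e: "(e \<longlongrightarrow> 0) (at t0 within {0..<t0})"
    using L1 unfolding L1_tendsto_def e_def by auto
  have near: "\<forall>\<^sub>F t in at t0 within {0..<t0}. t0 / 2 < t \<and> 0 \<le> t \<and> t < t0"
  proof (cases "0 < t0")
    case True
    then show ?thesis unfolding eventually_at by (intro exI[of _ "t0/2"]) (auto simp: dist_real_def)
  qed simp
  have reflect: "filterlim (\<lambda>t. 2 * t - t0) (at t0 within {0..<t0}) (at t0 within {0..<t0})"
    unfolding filterlim_at
  proof
    show "\<forall>\<^sub>F t in at t0 within {0..<t0}. 2 * t - t0 \<in> {0..<t0} \<and> 2 * t - t0 \<noteq> t0"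
      using near by eventually_elim auto
    have "((\<lambda>t. 2 * t - t0) \<longlongrightarrow> 2 * t0 - t0) (at t0 within {0..<t0})" by (intro tendsto_intros)
    then show "((\<lambda>t. 2 * t - t0) \<longlongrightarrow> t0) (at t0 within {0..<t0})" by simp
  qed
  have "((\<lambda>t. 3 * e t + 4 * e (2 * t - t0)) \<longlongrightarrow> 3 * 0 + 4 * 0) (at t0 within {0..<t0})"
    by (intro tendsto_add ennreal_tendsto_cmult e filterlim_compose[OF e reflect]) auto
  then have bound_lim: "((\<lambda>t. 3 * e t + 4 * e (2 * t - t0)) \<longlongrightarrow> 0) (at t0 within {0..<t0})"
    by simp
  show ?thesis
  proof (rule L1_tendstoI_bound[OF _ Y_int _ bound_lim])
    show "\<forall>\<^sub>F t in at t0 within {0..<t0}.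
        integrable M (\<lambda>\<omega>. real_cond_exp M (F t) (\<lambda>\<omega>'. A t0 \<omega>' - A t \<omega>') \<omega> / (t0 - t))"
      using near
    proof eventually_elim
      case (elim t)
      interpret sigma_finite_subalgebra M "F t" using sub elim by auto
      from elim have "integrable M (\<lambda>\<omega>. A t0 \<omega> - A t \<omega>)" by (simp add: A_int)
      then show ?case by (intro integrable_divide real_cond_exp_int(1))
    qed
    show "\<forall>\<^sub>F t in at t0 within {0..<t0}.
        (\<integral>\<^sup>+\<omega>. ennreal \<bar>real_cond_exp M (F t) (\<lambda>\<omega>'. A t0 \<omega>' - A t \<omega>') \<omega> / (t0 - t) - Y \<omega>\<bar> \<partial>M)
        \<le> 3 * e t + 4 * e (2 * t - t0)"
      using near
    proof eventually_elim
      case (elim t)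
      interpret sigma_finite_subalgebra M "F t" using sub elim by auto
      show ?case unfolding e_def
        using elim Y_int
        by (intro nn_integral_real_cond_exp_backward_quotient_le A_int adapted) auto
    qed
  qed
qed

section \<open>The integrated process\<close>

locale integrated_process = prob_space M for M :: "'a measure" +
  fixes B C :: "real \<Rightarrow> 'a \<Rightarrow> real" and T K :: real
  assumes T_pos: "0 < T"
    and B_measurable: "\<And>t. t \<in> {0..T} \<Longrightarrow> B t \<in> borel_measurable M"
    and C_measurable: "\<And>t. t \<in> {0..T} \<Longrightarrow> C t \<in> borel_measurable M"
    and B_continuous: "\<And>\<omega>. \<omega> \<in> space M \<Longrightarrow> continuous_on {0..T} (\<lambda>t. B t \<omega>)"
    and C_continuous: "\<And>\<omega>. \<omega> \<in> space M \<Longrightarrow> continuous_on {0..T} (\<lambda>t. C t \<omega>)"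
    and B_nonneg: "\<And>t \<omega>. t \<in> {0..T} \<Longrightarrow> \<omega> \<in> space M \<Longrightarrow> 0 \<le> B t \<omega>"
    and C_bounded: "\<And>t \<omega>. t \<in> {0..T} \<Longrightarrow> \<omega> \<in> space M \<Longrightarrow> \<bar>C t \<omega>\<bar> \<le> K"
    and B_integrable: "(\<integral>\<^sup>+\<omega>. (\<integral>\<^sup>+u\<in>{0..T}. ennreal (B u \<omega>) \<partial>lborel) \<partial>M) < \<infinity>"
begin

lemma continuous_on_B_plus_C: "\<omega> \<in> space M \<Longrightarrow> continuous_on {0..T} (\<lambda>u. B u \<omega> + C u \<omega>)"
  using B_continuous C_continuous by (intro continuous_intros)

lemma intproc_eq_integral:
  assumes "t \<in> {0..T}" and "\<omega> \<in> space M"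
  shows "intproc B C t \<omega> = integral {0..t} (\<lambda>u. B u \<omega> + C u \<omega>)"
  unfolding intproc_def using assms
  by (intro set_integral_Icc_eq_integral continuous_on_subset[OF continuous_on_B_plus_C]) auto

lemma measurable_intproc: "t \<in> {0..T} \<Longrightarrow> intproc B C t \<in> borel_measurable M"
  using B_measurable C_measurable continuous_on_B_plus_C
  by (intro borel_measurable_intproc[where t = T]) auto

lemma integrable_integral_B: "integrable M (\<lambda>\<omega>. integral {0..T} (\<lambda>u. B u \<omega>))"
proof (rule integrableI_nonneg)
  have "(\<lambda>\<omega>. LINT u:{0..T}|lborel. B u \<omega>) \<in> borel_measurable M"
    using T_pos B_measurable B_continuous
    by (intro borel_measurable_set_integral_process[where s = T and t = T]) auto
  then show "(\<lambda>\<omega>. integral {0..T} (\<lambda>u. B u \<omega>)) \<in> borel_measurable M"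
    by (rule measurable_cong[THEN iffD1, rotated])
      (simp add: set_integral_Icc_eq_integral[OF B_continuous])
  show "AE \<omega> in M. 0 \<le> integral {0..T} (\<lambda>u. B u \<omega>)"
    using B_nonneg B_continuous by (intro AE_I2 integral_nonneg integrable_continuous_interval) auto
  have "ennreal (integral {0..T} (\<lambda>u. B u \<omega>)) = (\<integral>\<^sup>+u\<in>{0..T}. ennreal (B u \<omega>) \<partial>lborel)"
    if "\<omega> \<in> space M" for \<omega>
    using B_nonneg[OF _ that] B_continuous[OF that]
    by (intro nn_integral_has_integral_lebesgue'[symmetric] integrable_integral
        integrable_continuous_interval) auto
  then have "(\<integral>\<^sup>+\<omega>. ennreal (integral {0..T} (\<lambda>u. B u \<omega>)) \<partial>M)
      = (\<integral>\<^sup>+\<omega>. (\<integral>\<^sup>+u\<in>{0..T}. ennreal (B u \<omega>) \<partial>lborel) \<partial>M)"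
    by (rule nn_integral_cong)
  then show "(\<integral>\<^sup>+\<omega>. ennreal (integral {0..T} (\<lambda>u. B u \<omega>)) \<partial>M) < \<infinity>"
    using B_integrable by simp
qed

lemma abs_intproc_le:
  assumes t: "t \<in> {0..T}" and \<omega>: "\<omega> \<in> space M"
  shows "\<bar>intproc B C t \<omega>\<bar> \<le> integral {0..T} (\<lambda>u. B u \<omega>) + T * K"
proof -
  have cont: "continuous_on {0..t} f" if "continuous_on {0..T} f" for f :: "real \<Rightarrow> real"
    by (rule continuous_on_subset[OF that]) (use t in auto)
  have int: "f integrable_on {0..t}" if "continuous_on {0..T} f" for f :: "real \<Rightarrow> real"
    by (rule integrable_continuous_interval[OF cont[OF that]])
  have split: "intproc B C t \<omega> = integral {0..t} (\<lambda>u. B u \<omega>) + integral {0..t} (\<lambda>u. C u \<omega>)"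
    using t \<omega> B_continuous C_continuous by (simp add: intproc_eq_integral integral_add int)
  have "0 \<le> integral {0..t} (\<lambda>u. B u \<omega>)"
    using t \<omega> B_nonneg B_continuous by (intro integral_nonneg int) auto
  moreover have "integral {0..t} (\<lambda>u. B u \<omega>) \<le> integral {0..T} (\<lambda>u. B u \<omega>)"
    using t \<omega> B_nonneg B_continuous
    by (intro integral_subset_le int integrable_continuous_interval) auto
  moreover have "\<bar>integral {0..t} (\<lambda>u. C u \<omega>)\<bar> \<le> t * K"
  proof -
    have C_bounds: "- K \<le> C u \<omega>" "C u \<omega> \<le> K" if "u \<in> {0..t}" for u
      using C_bounded[of u \<omega>] that t \<omega> by (auto simp: abs_le_iff)
    have "integral {0..t} (\<lambda>_. - K) \<le> integral {0..t} (\<lambda>u. C u \<omega>)"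
      using C_bounds(1) by (intro integral_le int C_continuous[OF \<omega>] integrable_const_ivl)
    moreover have "integral {0..t} (\<lambda>u. C u \<omega>) \<le> integral {0..t} (\<lambda>_. K)"
      using C_bounds(2) by (intro integral_le int C_continuous[OF \<omega>] integrable_const_ivl)
    moreover have "integral {0..t} (\<lambda>_. - K) = - (t * K)" "integral {0..t} (\<lambda>_. K) = t * K"
      using t by simp_all
    ultimately show ?thesis unfolding abs_le_iff by linarith
  qed
  moreover have "t * K \<le> T * K"
    using t C_bounded[OF t \<omega>] by (intro mult_right_mono) auto
  ultimately show ?thesis unfolding split by linarith
qed

lemma integrable_intproc:
  assumes "t \<in> {0..T}"
  shows "integrable M (intproc B C t)"
proof (rule Bochner_Integration.integrable_bound)
  show "integrable M (\<lambda>\<omega>. integral {0..T} (\<lambda>u. B u \<omega>) + T * K)"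
    using integrable_integral_B by simp
  show "intproc B C t \<in> borel_measurable M"
    using assms by (rule measurable_intproc)
  show "AE \<omega> in M. norm (intproc B C t \<omega>) \<le> norm (integral {0..T} (\<lambda>u. B u \<omega>) + T * K)"
  proof (rule AE_I2)
    fix \<omega> assume "\<omega> \<in> space M"
    then have "\<bar>intproc B C t \<omega>\<bar> \<le> integral {0..T} (\<lambda>u. B u \<omega>) + T * K"
      by (rule abs_intproc_le[OF assms])
    then show "norm (intproc B C t \<omega>) \<le> norm (integral {0..T} (\<lambda>u. B u \<omega>) + T * K)"
      by simp
  qed
qed

lemma diff_quot_intproc_ge:
  assumes t0: "t0 \<in> {0..T}" and t: "t \<in> {0..T}" and "t \<noteq> t0" and \<omega>: "\<omega> \<in> space M"
  shows "- K \<le> diff_quot (intproc B C) t0 t \<omega>"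
proof -
  have "- K \<le> B u \<omega> + C u \<omega>" if "u \<in> {0..T}" for u
    using B_nonneg[OF that \<omega>] C_bounded[OF that \<omega>] by linarith
  from integral_diff_quotient_ge[OF continuous_on_B_plus_C[OF \<omega>] this t0 t \<open>t \<noteq> t0\<close>[symmetric]]
  show ?thesis unfolding diff_quot_def using t0 t \<omega> by (simp add: intproc_eq_integral)
qed

lemma diff_quot_intproc_tendsto:
  assumes t0: "t0 \<in> {0..T}" and \<omega>: "\<omega> \<in> space M"
  shows "((\<lambda>t. diff_quot (intproc B C) t0 t \<omega>) \<longlongrightarrow> B t0 \<omega> + C t0 \<omega>) (at t0 within {0..T})"
proof -
  have "((\<lambda>u. integral {0..u} (\<lambda>v. B v \<omega> + C v \<omega>)) has_field_derivative B t0 \<omega> + C t0 \<omega>)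
      (at t0 within {0..T})"
    using integral_has_vector_derivative[OF continuous_on_B_plus_C[OF \<omega>] t0]
    by (simp add: has_real_derivative_iff_has_vector_derivative)
  then have "((\<lambda>t. (integral {0..t} (\<lambda>v. B v \<omega> + C v \<omega>) - integral {0..t0} (\<lambda>v. B v \<omega> + C v \<omega>))
      / (t - t0)) \<longlongrightarrow> B t0 \<omega> + C t0 \<omega>) (at t0 within {0..T})"
    by (simp add: has_field_derivative_iff)
  moreover have "\<forall>\<^sub>F t in at t0 within {0..T}. (integral {0..t} (\<lambda>v. B v \<omega> + C v \<omega>)
      - integral {0..t0} (\<lambda>v. B v \<omega> + C v \<omega>)) / (t - t0) = diff_quot (intproc B C) t0 t \<omega>"
    unfolding eventually_at_filter diff_quot_def
    using t0 \<omega> by (intro always_eventually) (simp add: intproc_eq_integral)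
  ultimately show ?thesis by (rule Lim_transform_eventually)
qed

lemma L1_tendsto_diff_quot_intproc:
  assumes t0: "t0 \<in> {0..T}"
    and mean: "((\<lambda>t. \<integral>\<omega>. diff_quot (intproc B C) t0 t \<omega> \<partial>M) \<longlongrightarrow> (\<integral>\<omega>. B t0 \<omega> + C t0 \<omega> \<partial>M))
      (at t0 within {0..T})"
  shows "L1_tendsto M (diff_quot (intproc B C) t0) (\<lambda>\<omega>. B t0 \<omega> + C t0 \<omega>) (at t0 within {0..T})"
proof (rule L1_tendsto_bounded_below[where c = "- K", OF _ _ _ _ diff_quot_intproc_tendsto[OF t0] mean])
  show "t0 islimpt {0..T}" using T_pos t0 by simp
  show "integrable M (diff_quot (intproc B C) t0 t)" if "t \<in> {0..T} - {t0}" for t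
    unfolding diff_quot_def[abs_def] using that t0
    by (intro integrable_divide Bochner_Integration.integrable_diff integrable_intproc) auto
  show "(\<lambda>\<omega>. B t0 \<omega> + C t0 \<omega>) \<in> borel_measurable M"
    using B_measurable[OF t0] C_measurable[OF t0] by measurable
  show "- K \<le> diff_quot (intproc B C) t0 t \<omega>" if "t \<in> {0..T} - {t0}" "\<omega> \<in> space M" for t \<omega>
    using that t0 by (intro diff_quot_intproc_ge) auto
qed
end

theorem propositionD2:
  fixes M :: "'a measure" and F :: "real \<Rightarrow> 'a measure"
    and B C :: "real \<Rightarrow> 'a \<Rightarrow> real" and T t0 :: real
  assumes prob: "prob_space M"
    and filt_sub: "\<And>t. 0 \<le> t \<Longrightarrow> subalgebra M (F t)"
    and filt_mono: "\<And>s t. 0 \<le> s \<Longrightarrow> s \<le> t \<Longrightarrow> sets (F s) \<subseteq> sets (F t)"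
    and filt_leftcont: "\<And>t. 0 < t \<Longrightarrow>
           sets (F t) = sigma_sets (space M) (\<Union>u\<in>{0..<t}. sets (F u))"
    and T_pos: "0 < T"
    and B_adapted: "\<And>t. t \<in> {0..T} \<Longrightarrow> B t \<in> borel_measurable (F t)"
    and C_adapted: "\<And>t. t \<in> {0..T} \<Longrightarrow> C t \<in> borel_measurable (F t)"
    and B_cont: "\<And>\<omega>. \<omega> \<in> space M \<Longrightarrow> continuous_on {0..T} (\<lambda>t. B t \<omega>)"
    and C_cont: "\<And>\<omega>. \<omega> \<in> space M \<Longrightarrow> continuous_on {0..T} (\<lambda>t. C t \<omega>)"
    and B_nonneg: "\<And>t \<omega>. t \<in> {0..T} \<Longrightarrow> \<omega> \<in> space M \<Longrightarrow> 0 \<le> B t \<omega>"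
    and C_bdd: "\<exists>K. \<forall>t\<in>{0..T}. \<forall>\<omega>\<in>space M. \<bar>C t \<omega>\<bar> \<le> K"
    and B_int: "(\<integral>\<^sup>+ \<omega>. (\<integral>\<^sup>+ u\<in>{0..T}. ennreal (B u \<omega>) \<partial>lborel) \<partial>M) < \<infinity>"
    and t0: "t0 \<in> {0..T}"
    and hyp: "((\<lambda>t. integral\<^sup>L M (\<lambda>\<omega>. (intproc B C t \<omega> - intproc B C t0 \<omega>) / (t - t0)))
                \<longlongrightarrow> integral\<^sup>L M (\<lambda>\<omega>. B t0 \<omega> + C t0 \<omega>)) (at t0 within {0..T})"
  shows "L1_tendsto M
           (\<lambda>t \<omega>. real_cond_exp M (F t) (\<lambda>\<omega>'. intproc B C t0 \<omega>' - intproc B C t \<omega>') \<omega> / (t0 - t))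
           (\<lambda>\<omega>. B t0 \<omega> + C t0 \<omega>) (at t0 within {0..<t0})
       \<and> L1_tendsto M
           (\<lambda>t \<omega>. real_cond_exp M (F t0) (\<lambda>\<omega>'. intproc B C t \<omega>' - intproc B C t0 \<omega>') \<omega> / (t - t0))
           (\<lambda>\<omega>. B t0 \<omega> + C t0 \<omega>) (at t0 within {t0<..T})"
proof -
  interpret prob_space M by (rule prob)
  obtain K where K: "\<And>t \<omega>. t \<in> {0..T} \<Longrightarrow> \<omega> \<in> space M \<Longrightarrow> \<bar>C t \<omega>\<bar> \<le> K"
    using C_bdd by blast
  have space_F: "space (F t) = space M" if "0 \<le> t" for t
    using filt_sub[OF that] by (simp add: subalgebra_def)
  have F_sub: "subalgebra (F t) (F s)" if "0 \<le> s" "s \<le> t" for s t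
    using that filt_mono[OF that] space_F unfolding subalgebra_def by auto
  have sigma_finite_F: "sigma_finite_subalgebra M (F t)" if "0 \<le> t" for t
    using filt_sub[OF that] finite_measure_axioms
    by (intro finite_measure_subalgebra_is_sigma_finite)
      (simp add: finite_measure_subalgebra_def finite_measure_subalgebra_axioms_def)
  have B_F: "B s \<in> borel_measurable (F t)" and C_F: "C s \<in> borel_measurable (F t)"
    if "0 \<le> s" "s \<le> t" "t \<le> T" for s t
    using that B_adapted C_adapted by (auto intro: measurable_from_subalg[OF F_sub])
  interpret integrated_process M B C T K
    using T_pos B_cont C_cont B_nonneg K B_int B_F C_F space_F filt_sub
    by unfold_locales (auto intro: measurable_from_subalg[OF filt_sub])
  have A_adapted: "intproc B C s \<in> borel_measurable (F t)" if "0 \<le> s" "s \<le> t" "t \<le> T" for s t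
    using that B_F C_F space_F
    by (intro borel_measurable_intproc[where t = t] continuous_on_subset[OF continuous_on_B_plus_C]) auto
  have L1: "L1_tendsto M (diff_quot (intproc B C) t0) (\<lambda>\<omega>. B t0 \<omega> + C t0 \<omega>) (at t0 within {0..T})"
    using hyp by (intro L1_tendsto_diff_quot_intproc t0) (simp add: diff_quot_def)
  have Y_F: "(\<lambda>\<omega>. B t0 \<omega> + C t0 \<omega>) \<in> borel_measurable (F t0)"
    using B_adapted[OF t0] C_adapted[OF t0] by measurable
  have "\<forall>\<^sub>F t in at t0 within {t0<..T}. integrable M (intproc B C t)"
    unfolding eventually_at_filter using t0 by (intro always_eventually) (auto intro: integrable_intproc)
  then show ?thesis
    using t0 sigma_finite_F A_adapted integrable_intproc Y_F
    by (intro conjI L1_tendsto_real_cond_exp_backward_quotient L1_tendsto_real_cond_exp_forward_quotient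
        L1_tendsto_within_subset[OF L1]) auto
qed

end
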